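(* In the linear deterministic diamond network with a disturbing node with gains $n_1,n_2,n_3,n_4,m$, suppose $n_1>n_2$, $n_4\ge n_3$ and $m>n_2$. Then the linear capacity is $C=\min(n_1,n_3)$.
   Context: The shift matrix $Q$ is the $q\times q$ matrix over $\mathbb{F}_2$ with $Q_{i+1,i}=1$ for $1\le i\le q-1$ and all other entries $0$, where $q=\max(n_1,n_2,n_3,n_4,m)$ and all gains are nonnegative integers. Network: source $S$, relays $A,B$, destination $D$, disturbing node $M$; gains $n_1$ ($S\to A$), $n_2$ ($S\to B$), $n_3$ ($A\to D$), $n_4$ ($B\to D$), $m$ ($M\to A$ and $M\to B$). Each node transmits $x_i\in\mathbb{F}_2^q$ and receives $y_j=\sum_{k:(k,j)\text{ an edge}}Q^{q-n_{(k,j)}}x_k$; relays use linear maps $x_A=G_Ay_A$, $x_B=G_By_B$ with $G_A,G_B$ arbitrary $q\times q$ matrices over $\mathbb{F}_2$. Then $y_D=G_Sx_S+G_Mx_M$ with $G_S=Q^{q-n_3}G_AQ^{q-n_1}+Q^{q-n_4}G_BQ^{q-n_2}$ and $G_M=Q^{q-n_3}G_AQ^{q-m}+Q^{q-n_4}G_BQ^{q-m}$. The rate $R(G_A,G_B)$ is the maximum dimension of a subspace $\mathcal{X}\subseteq\mathbb{F}_2^q$ such that for all $x_S,x_S'\in\mathcal{X}$, $x_M,x_M'\in\mathbb{F}_2^q$, $G_Sx_S+G_Mx_M=G_Sx_S'+G_Mx_M'$ implies $x_S=x_S'$. The linear capacity is $C=\max_{G_A,G_B}R(G_A,G_B)$.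 *)

theory Defs
  imports "HOL-Library.Z2" "Jordan_Normal_Form.VS_Connect"
begin

definition net_q :: "nat \<Rightarrow> nat \<Rightarrow> nat \<Rightarrow> nat \<Rightarrow> nat \<Rightarrow> nat" where
  "net_q n1 n2 n3 n4 m = max n1 (max n2 (max n3 (max n4 m)))"

text \<open>Shift matrix: \<open>Q_{i+1,i} = 1\<close> (1-indexed), i.e. entry (i,j) is 1 iff i = j+1 (0-indexed).\<close>
definition shift_mat :: "nat \<Rightarrow> bit mat" where
  "shift_mat q = mat q q (\<lambda>(i, j). if i = Suc j then 1 else 0)"

definition G_S :: "nat \<Rightarrow> nat \<Rightarrow> nat \<Rightarrow> nat \<Rightarrow> nat \<Rightarrow> bit mat \<Rightarrow> bit mat \<Rightarrow> bit mat" where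
  "G_S n1 n2 n3 n4 m GA GB =
     (let q = net_q n1 n2 n3 n4 m; Q = shift_mat q in
      Q ^\<^sub>m (q - n3) * GA * Q ^\<^sub>m (q - n1) + Q ^\<^sub>m (q - n4) * GB * Q ^\<^sub>m (q - n2))"

definition G_M :: "nat \<Rightarrow> nat \<Rightarrow> nat \<Rightarrow> nat \<Rightarrow> nat \<Rightarrow> bit mat \<Rightarrow> bit mat \<Rightarrow> bit mat" where
  "G_M n1 n2 n3 n4 m GA GB =
     (let q = net_q n1 n2 n3 n4 m; Q = shift_mat q in
      Q ^\<^sub>m (q - n3) * GA * Q ^\<^sub>m (q - m) + Q ^\<^sub>m (q - n4) * GB * Q ^\<^sub>m (q - m))"

definition decodable :: "nat \<Rightarrow> bit mat \<Rightarrow> bit mat \<Rightarrow> bit vec set \<Rightarrow> bool" where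
  "decodable q GS GM X \<longleftrightarrow>
     (\<forall>xs\<in>X. \<forall>xs'\<in>X. \<forall>xm\<in>carrier_vec q. \<forall>xm'\<in>carrier_vec q.
        GS *\<^sub>v xs + GM *\<^sub>v xm = GS *\<^sub>v xs' + GM *\<^sub>v xm' \<longrightarrow> xs = xs')"

definition net_rate :: "nat \<Rightarrow> nat \<Rightarrow> nat \<Rightarrow> nat \<Rightarrow> nat \<Rightarrow> bit mat \<Rightarrow> bit mat \<Rightarrow> nat" where
  "net_rate n1 n2 n3 n4 m GA GB =
     (let q = net_q n1 n2 n3 n4 m in
      Max {vectorspace.dim class_ring ((module_vec TYPE(bit) q)\<lparr>carrier := X\<rparr>) | X.
             subspace class_ring X (module_vec TYPE(bit) q) \<and>
             decodable q (G_S n1 n2 n3 n4 m GA GB) (G_M n1 n2 n3 n4 m GA GB) X})"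

definition linear_capacity :: "nat \<Rightarrow> nat \<Rightarrow> nat \<Rightarrow> nat \<Rightarrow> nat \<Rightarrow> nat" where
  "linear_capacity n1 n2 n3 n4 m =
     (let q = net_q n1 n2 n3 n4 m in
      Max {net_rate n1 n2 n3 n4 m GA GB | GA GB. GA \<in> carrier_mat q q \<and> GB \<in> carrier_mat q q})"

end

theory Submission
  imports Defs "Jordan_Normal_Form.DL_Rank"
begin

text \<open>Upper bound: without disturbance, the observation at D depends only on the top \<open>n1\<close>
  levels of the source signal, because \<open>n2 < n1\<close>. Since \<open>m > n2\<close>, the disturbing node can instead
  replay at B exactly what the source delivers there; over GF(2) the two copies forwarded by B cancel
  at D, which then only sees the top \<open>n3\<close> levels of A's output. Decodability makes both
  observations injective on the codebook, so its dimension is at most \<open>min n1 n3\<close>.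

  Achievability: A shifts its received signal back up, and B forwards the same signal delayed by
  \<open>n4 - n3\<close>, so that both contributions arrive aligned at D. The disturbance, which reaches A and
  B identically, then cancels, and each source level \<open>x\<^sub>t\<close>, \<open>t < min n1 n3\<close>, arrives as
  \<open>x\<^sub>t + x\<^sub>t\<^sub>-\<^sub>d\<close> with \<open>d = n1 - n2 > 0\<close>, which can be solved for \<open>x\<close> level by level.\<close>

section \<open>Dimension of subspaces of \<open>'a\<^sup>q\<close>\<close>

abbreviation vec_subspace_dim :: "nat \<Rightarrow> 'a::field vec set \<Rightarrow> nat" where
  "vec_subspace_dim q X \<equiv> vectorspace.dim class_ring ((module_vec TYPE('a) q)\<lparr>carrier := X\<rparr>)"

context vec_space
begin

lemma subspace_fin_dim:
  assumes X: "subspace class_ring X V"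
  shows "vectorspace.fin_dim class_ring (vs X)"
proof -
  interpret W: vectorspace class_ring "vs X" using subspace_is_vs[OF X] .
  have sub: "submodule class_ring X V" using X by (simp add: subspace_def)
  have bound: "finite S \<and> card S \<le> n" if S: "S \<subseteq> carrier (vs X) \<and> W.lin_indpt S" for S
  proof -
    have SX: "S \<subseteq> X" using S by simp
    have li: "lin_indpt S"
      using span_li_not_depend(2)[OF SX sub] S by simp
    have SC: "S \<subseteq> carrier_vec n" using SX sub by (auto simp: submodule_def subgroup_def)
    show ?thesis using li_le_dim[OF fin_dim SC li] dim_is_n by simp
  qed
  have "{} \<subseteq> carrier (vs X) \<and> W.lin_indpt {}"
    by (simp add: W.lin_dep_def)
  then obtain A where A: "finite A" "maximal A (\<lambda>S. S \<subseteq> carrier (vs X) \<and> W.lin_indpt S)"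
    using maximal_exists[of "\<lambda>S. S \<subseteq> carrier (vs X) \<and> W.lin_indpt S" n "{}", OF bound] by blast
  have "W.basis A" by (rule W.max_li_is_basis[OF A(2)])
  then show ?thesis using A(1) unfolding W.fin_dim_def W.basis_def by blast
qed

lemma subspace_dim_le:
  assumes "subspace class_ring X V"
  shows "vectorspace.dim class_ring (vs X) \<le> n"
  using subspace_dim[OF assms fin_dim subspace_fin_dim[OF assms]] dim_is_n by simp

end

lemma subspace_carrier_vec:
  assumes "subspace class_ring X (module_vec TYPE('a::field) q)"
  shows "X \<subseteq> carrier_vec q"
  using assms unfolding subspace_def LinearCombinations.submodule_def by (auto simp: module_vec_simps)

lemma subspace_dim_le_of_inj_on_linear:
  fixes X :: "'a::field vec set" and T :: "'a vec \<Rightarrow> 'a vec"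
  assumes X: "subspace class_ring X (module_vec TYPE('a) q)"
    and T: "\<And>x. x \<in> X \<Longrightarrow> T x \<in> carrier_vec k"
    and add: "\<And>x y. x \<in> X \<Longrightarrow> y \<in> X \<Longrightarrow> T (x + y) = T x + T y"
    and smult: "\<And>a x. x \<in> X \<Longrightarrow> T (a \<cdot>\<^sub>v x) = a \<cdot>\<^sub>v T x"
    and inj: "inj_on T X"
  shows "vec_subspace_dim q X \<le> k"
proof -
  interpret Vq: vec_space "TYPE('a)" q .
  interpret Vk: vec_space "TYPE('a)" k .
  interpret VX: vectorspace class_ring "Vq.vs X" using Vq.subspace_is_vs[OF X] .
  interpret L: linear_map class_ring "Vq.vs X" "module_vec TYPE('a) k" T
    by unfold_locales
      (use T add smult in \<open>auto simp: LinearCombinations.module_hom_def module_vec_simps\<close>)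
  have "vectorspace.dim class_ring (Vk.vs L.imT) + vectorspace.dim class_ring (VX.vs L.kerT) = VX.dim"
    by (rule L.rank_nullity[OF Vq.subspace_fin_dim[OF X]])
  moreover have "vectorspace.dim class_ring (VX.vs L.kerT) = 0"
    by (rule L.inj_imp_dim_ker0) (use inj in simp)
  moreover have "vectorspace.dim class_ring (Vk.vs L.imT) \<le> k"
    by (rule Vk.subspace_dim_le[OF L.imT_is_subspace])
  ultimately show ?thesis by simp
qed

lemma subspace_dim_le_of_inj_on_vec_first:
  fixes X :: "'a::field vec set"
  assumes X: "subspace class_ring X (module_vec TYPE('a) q)"
    and M: "M \<in> carrier_mat n q" and k: "k \<le> n"
    and inj: "inj_on (\<lambda>x. vec_first (M *\<^sub>v x) k) X"
  shows "vec_subspace_dim q X \<le> k"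
proof (rule subspace_dim_le_of_inj_on_linear[OF X _ _ _ inj])
  have XC: "X \<subseteq> carrier_vec q" by (rule subspace_carrier_vec[OF X])
  show "vec_first (M *\<^sub>v (x + y)) k = vec_first (M *\<^sub>v x) k + vec_first (M *\<^sub>v y) k"
    if "x \<in> X" "y \<in> X" for x y
  proof -
    have "M *\<^sub>v (x + y) = M *\<^sub>v x + M *\<^sub>v y"
      using that XC by (intro mult_add_distrib_mat_vec[OF M]) auto
    then show ?thesis using M k by (intro eq_vecI) (auto simp: vec_first_def)
  qed
  show "vec_first (M *\<^sub>v (a \<cdot>\<^sub>v x)) k = a \<cdot>\<^sub>v vec_first (M *\<^sub>v x) k" if "x \<in> X" for a x
  proof -
    have "M *\<^sub>v (a \<cdot>\<^sub>v x) = a \<cdot>\<^sub>v (M *\<^sub>v x)"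
      using that XC by (intro mult_mat_vec[OF M]) auto
    then show ?thesis using M k by (intro eq_vecI) (auto simp: vec_first_def)
  qed
qed simp

definition prefix_vecs :: "nat \<Rightarrow> nat \<Rightarrow> 'a::zero vec set" where
  "prefix_vecs q k = {x \<in> carrier_vec q. \<forall>i<q. k \<le> i \<longrightarrow> x $ i = 0}"

lemma prefix_vecs_subspace: "subspace class_ring (prefix_vecs q k) (module_vec TYPE('a::field) q)"
proof -
  have "submodule class_ring (prefix_vecs q k) (module_vec TYPE('a) q)"
    by (rule LinearCombinations.submodule.intro[OF vec_module])
      (auto simp: prefix_vecs_def module_vec_simps)
  then show ?thesis unfolding subspace_def using vec_vs by blast
qed

lemma prefix_vecs_eqI:
  assumes "x \<in> prefix_vecs q k" "y \<in> prefix_vecs q k" and "\<And>i. i < k \<Longrightarrow> x $ i = y $ i"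
  shows "x = y"
proof (rule eq_vecI)
  show "x $ i = y $ i" if "i < dim_vec y" for i
    using assms that by (cases "i < k") (auto simp: prefix_vecs_def)
qed (use assms in \<open>auto simp: prefix_vecs_def\<close>)

lemma prefix_vecs_dim:
  assumes kq: "k \<le> q"
  shows "vec_subspace_dim q (prefix_vecs q k :: 'a::field vec set) = k"
proof (rule antisym)
  have "inj_on (\<lambda>x. vec_first (1\<^sub>m q *\<^sub>v x) k) (prefix_vecs q k :: 'a vec set)"
  proof (rule inj_onI)
    fix x y :: "'a vec"
    assume xy: "x \<in> prefix_vecs q k" "y \<in> prefix_vecs q k"
      and eq: "vec_first (1\<^sub>m q *\<^sub>v x) k = vec_first (1\<^sub>m q *\<^sub>v y) k"
    have "x $ i = y $ i" if "i < k" for i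
      using arg_cong[OF eq, of "\<lambda>v. v $ i"] that kq xy by (auto simp: prefix_vecs_def vec_first_def)
    then show "x = y" by (rule prefix_vecs_eqI[OF xy])
  qed
  then show "vec_subspace_dim q (prefix_vecs q k :: 'a vec set) \<le> k"
    by (rule subspace_dim_le_of_inj_on_vec_first[OF prefix_vecs_subspace one_carrier_mat kq])
next
  interpret Vq: vec_space "TYPE('a)" q .
  have X: "subspace class_ring (prefix_vecs q k) (module_vec TYPE('a) q)"
    by (rule prefix_vecs_subspace)
  interpret VX: vectorspace class_ring "Vq.vs (prefix_vecs q k)" using Vq.subspace_is_vs[OF X] .
  let ?U = "unit_vec q ` {..<k} :: 'a vec set"
  have UX: "?U \<subseteq> prefix_vecs q k" using kq by (auto simp: prefix_vecs_def)
  have "Vq.lin_indpt (set (unit_vecs q))" using Vq.unit_vecs_basis by (simp add: Vq.basis_def)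
  then have "Vq.lin_indpt ?U"
    by (rule Vq.subset_li_is_li) (use kq in \<open>auto simp: unit_vecs_def\<close>)
  then have "VX.lin_indpt ?U"
    using Vq.span_li_not_depend(2)[OF UX] X by (simp add: subspace_def)
  then have "card ?U \<le> VX.dim"
    using VX.li_le_dim(2)[OF Vq.subspace_fin_dim[OF X]] UX by auto
  moreover have "inj_on (unit_vec q :: nat \<Rightarrow> 'a vec) {..<k}"
    using kq by (intro inj_onI) (auto simp: unit_vec_eq)
  ultimately show "k \<le> vec_subspace_dim q (prefix_vecs q k :: 'a vec set)"
    by (simp add: card_image)
qed

section \<open>Shift matrices\<close>

lemma shift_mat_carrier [simp]: "shift_mat q \<in> carrier_mat q q"
  and shift_mat_dim [simp]: "dim_row (shift_mat q) = q" "dim_col (shift_mat q) = q"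
  by (simp_all add: shift_mat_def)

lemma shift_mat_pow_carrier [simp]: "shift_mat q ^\<^sub>m j \<in> carrier_mat q q"
  by (rule pow_carrier_mat[OF shift_mat_carrier])

lemma shift_mat_mult_vec:
  assumes x: "x \<in> carrier_vec q"
  shows "shift_mat q *\<^sub>v x = vec q (\<lambda>i. if i = 0 then 0 else x $ (i - 1))"
proof (rule eq_vecI)
  fix i assume "i < dim_vec (vec q (\<lambda>i. if i = 0 then 0 else x $ (i - 1)))"
  then have i: "i < q" by simp
  have "(shift_mat q *\<^sub>v x) $ i = (\<Sum>c<q. (if i = Suc c then 1 else 0) * x $ c)"
    using i x by (simp add: shift_mat_def scalar_prod_def lessThan_atLeast0)
  also have "\<dots> = (if i = 0 then 0 else x $ (i - 1))"
  proof (cases i)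
    case (Suc j)
    have "(\<Sum>c<q. (if i = Suc c then 1 else 0) * x $ c) = (\<Sum>c<q. if c = j then x $ c else 0)"
      by (rule sum.cong) (auto simp: Suc)
    also have "\<dots> = x $ j" using i Suc by simp
    finally show ?thesis using Suc by simp
  qed simp
  finally show "(shift_mat q *\<^sub>v x) $ i = vec q (\<lambda>i. if i = 0 then 0 else x $ (i - 1)) $ i"
    using i by simp
qed (simp add: shift_mat_def)

lemma shift_mat_pow_mult_vec:
  "x \<in> carrier_vec q \<Longrightarrow>
    (shift_mat q ^\<^sub>m j) *\<^sub>v x = vec q (\<lambda>i. if j \<le> i then x $ (i - j) else 0)"
proof (induction j arbitrary: x)
  case 0
  then show ?case by (intro eq_vecI) auto
next
  case (Suc j)
  have "(shift_mat q ^\<^sub>m Suc j) *\<^sub>v x = (shift_mat q ^\<^sub>m j) *\<^sub>v (shift_mat q *\<^sub>v x)"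
    using Suc.prems by (simp add: assoc_mult_mat_vec[of _ q q _ q])
  also have "\<dots> = vec q (\<lambda>i. if j \<le> i then (shift_mat q *\<^sub>v x) $ (i - j) else 0)"
    by (rule Suc.IH) (rule mult_mat_vec_carrier[OF shift_mat_carrier Suc.prems])
  also have "\<dots> = vec q (\<lambda>i. if Suc j \<le> i then x $ (i - Suc j) else 0)"
    using Suc.prems by (intro eq_vecI) (auto simp: shift_mat_mult_vec)
  finally show ?case .
qed

lemma shift_mat_pow_mult_vec_carrier [simp]:
  "x \<in> carrier_vec q \<Longrightarrow> (shift_mat q ^\<^sub>m j) *\<^sub>v x \<in> carrier_vec q"
  by (rule mult_mat_vec_carrier[OF shift_mat_pow_carrier])

lemma shift_mat_pow_mult_vec_index:
  "x \<in> carrier_vec q \<Longrightarrow> i < q \<Longrightarrow>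
    ((shift_mat q ^\<^sub>m j) *\<^sub>v x) $ i = (if j \<le> i then x $ (i - j) else 0)"
  by (simp add: shift_mat_pow_mult_vec)

lemma shift_mat_pow_mult_vec_add:
  assumes x: "x \<in> carrier_vec q"
  shows "(shift_mat q ^\<^sub>m a) *\<^sub>v ((shift_mat q ^\<^sub>m b) *\<^sub>v x) = (shift_mat q ^\<^sub>m (a + b)) *\<^sub>v x"
  using x by (intro eq_vecI) (auto simp: shift_mat_pow_mult_vec)

definition shift_up_mat :: "nat \<Rightarrow> nat \<Rightarrow> bit mat" where
  "shift_up_mat q j = mat q q (\<lambda>(i, c). if c = i + j then 1 else 0)"

lemma shift_up_mat_carrier [simp]: "shift_up_mat q j \<in> carrier_mat q q"
  by (simp add: shift_up_mat_def)

lemma shift_up_mat_mult_vec_index: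
  assumes y: "y \<in> carrier_vec q" and i: "i < q"
  shows "(shift_up_mat q j *\<^sub>v y) $ i = (if i + j < q then y $ (i + j) else 0)"
proof -
  have "(shift_up_mat q j *\<^sub>v y) $ i = (\<Sum>c<q. (if c = i + j then 1 else 0) * y $ c)"
    using i y by (simp add: shift_up_mat_def scalar_prod_def lessThan_atLeast0 del: mult_bit_eq_and)
  also have "\<dots> = (\<Sum>c<q. if c = i + j then y $ c else 0)"
    by (rule sum.cong) auto
  also have "\<dots> = (if i + j < q then y $ (i + j) else 0)" by simp
  finally show ?thesis .
qed

lemma inj_on_vec_first_of_inj_on_shift:
  assumes k: "k \<le> q" and f: "\<And>x. x \<in> X \<Longrightarrow> f x \<in> carrier_vec q"
    and inj: "inj_on (\<lambda>x. (shift_mat q ^\<^sub>m (q - k)) *\<^sub>v f x) X"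
  shows "inj_on (\<lambda>x. vec_first (f x) k) X"
proof (rule inj_onI)
  fix x y assume xy: "x \<in> X" "y \<in> X" and eq: "vec_first (f x) k = vec_first (f y) k"
  have "f x $ i = f y $ i" if "i < k" for i
    using arg_cong[OF eq, of "\<lambda>v. v $ i"] that by (simp add: vec_first_def)
  then have "(shift_mat q ^\<^sub>m (q - k)) *\<^sub>v f x = (shift_mat q ^\<^sub>m (q - k)) *\<^sub>v f y"
    using f[OF xy(1)] f[OF xy(2)] k by (intro eq_vecI) (auto simp: shift_mat_pow_mult_vec)
  then show "x = y" using inj xy by (auto dest: inj_onD)
qed

lemma subspace_dim_le_of_inj_on_shift:
  assumes X: "subspace class_ring X (module_vec TYPE(bit) q)"
    and M: "M \<in> carrier_mat q q" and k: "k \<le> q"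
    and inj: "inj_on (\<lambda>x. (shift_mat q ^\<^sub>m (q - k)) *\<^sub>v (M *\<^sub>v x)) X"
  shows "vec_subspace_dim q X \<le> k"
proof (rule subspace_dim_le_of_inj_on_vec_first[OF X M k])
  show "inj_on (\<lambda>x. vec_first (M *\<^sub>v x) k) X"
    using subspace_carrier_vec[OF X] M by (intro inj_on_vec_first_of_inj_on_shift[OF k _ inj]) auto
qed

lemma mult_mat_zero_vec: "A \<in> carrier_mat n k \<Longrightarrow> A *\<^sub>v 0\<^sub>v k = 0\<^sub>v n"
  by (intro eq_vecI) auto

lemma mult_mat_mult_mat_mult_vec:
  assumes "P \<in> carrier_mat q q" "G \<in> carrier_mat q q" "R \<in> carrier_mat q q" "x \<in> carrier_vec q"
  shows "(P * G * R) *\<^sub>v x = P *\<^sub>v (G *\<^sub>v (R *\<^sub>v x))"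
  using assms by (simp add: assoc_mult_mat_vec[of _ q q _ q])

lemma bit_vec_add_self: "(v :: bit vec) \<in> carrier_vec q \<Longrightarrow> v + v = 0\<^sub>v q"
  by (intro eq_vecI) (auto simp del: add_bit_eq_xor)

lemma bit_vec_add_cancel:
  "a \<in> carrier_vec q \<Longrightarrow> b \<in> carrier_vec q \<Longrightarrow> c \<in> carrier_vec q \<Longrightarrow>
    a + b + (c + (b :: bit vec)) = a + c"
  by (intro eq_vecI) (auto simp del: add_bit_eq_xor simp: algebra_simps)

lemma net_q_ge: "n1 \<le> net_q n1 n2 n3 n4 m" "n2 \<le> net_q n1 n2 n3 n4 m" "n3 \<le> net_q n1 n2 n3 n4 m"
  "n4 \<le> net_q n1 n2 n3 n4 m" "m \<le> net_q n1 n2 n3 n4 m"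
  by (auto simp: net_q_def)

lemma G_S_mult_vec:
  assumes q: "q = net_q n1 n2 n3 n4 m" and x: "x \<in> carrier_vec q"
    and A: "GA \<in> carrier_mat q q" and B: "GB \<in> carrier_mat q q"
  shows "G_S n1 n2 n3 n4 m GA GB *\<^sub>v x =
    (shift_mat q ^\<^sub>m (q - n3)) *\<^sub>v (GA *\<^sub>v ((shift_mat q ^\<^sub>m (q - n1)) *\<^sub>v x)) +
    (shift_mat q ^\<^sub>m (q - n4)) *\<^sub>v (GB *\<^sub>v ((shift_mat q ^\<^sub>m (q - n2)) *\<^sub>v x))"
  unfolding G_S_def Let_def q[symmetric] using x A B
  by (subst add_mult_distrib_mat_vec[of _ q q])
    (auto simp: mult_mat_mult_mat_mult_vec[OF shift_mat_pow_carrier A shift_mat_pow_carrier x]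
      mult_mat_mult_mat_mult_vec[OF shift_mat_pow_carrier B shift_mat_pow_carrier x])

lemma G_M_mult_vec:
  assumes q: "q = net_q n1 n2 n3 n4 m" and x: "x \<in> carrier_vec q"
    and A: "GA \<in> carrier_mat q q" and B: "GB \<in> carrier_mat q q"
  shows "G_M n1 n2 n3 n4 m GA GB *\<^sub>v x =
    (shift_mat q ^\<^sub>m (q - n3)) *\<^sub>v (GA *\<^sub>v ((shift_mat q ^\<^sub>m (q - m)) *\<^sub>v x)) +
    (shift_mat q ^\<^sub>m (q - n4)) *\<^sub>v (GB *\<^sub>v ((shift_mat q ^\<^sub>m (q - m)) *\<^sub>v x))"
  unfolding G_M_def Let_def q[symmetric] using x A B
  by (subst add_mult_distrib_mat_vec[of _ q q])
    (auto simp: mult_mat_mult_mat_mult_vec[OF shift_mat_pow_carrier A shift_mat_pow_carrier x]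
      mult_mat_mult_mat_mult_vec[OF shift_mat_pow_carrier B shift_mat_pow_carrier x])

lemma G_S_carrier: "G_S n1 n2 n3 n4 m GA GB \<in> carrier_mat (net_q n1 n2 n3 n4 m) (net_q n1 n2 n3 n4 m)"
  by (rule carrier_matI) (simp_all add: G_S_def Let_def)

lemma G_M_carrier: "G_M n1 n2 n3 n4 m GA GB \<in> carrier_mat (net_q n1 n2 n3 n4 m) (net_q n1 n2 n3 n4 m)"
  by (rule carrier_matI) (simp_all add: G_M_def Let_def)

lemma decodable_inj_on:
  assumes "decodable q GS GM X" and "\<And>x. x \<in> X \<Longrightarrow> f x \<in> carrier_vec q"
  shows "inj_on (\<lambda>x. GS *\<^sub>v x + GM *\<^sub>v f x) X"
  using assms unfolding decodable_def inj_on_def by blast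

lemma decodable_if_disturbance_vanishes:
  assumes GS: "GS \<in> carrier_mat q q"
    and GM: "\<And>xm. xm \<in> carrier_vec q \<Longrightarrow> GM *\<^sub>v xm = 0\<^sub>v q"
    and inj: "inj_on (\<lambda>x. GS *\<^sub>v x) X"
  shows "decodable q GS GM X"
proof -
  have "GS *\<^sub>v x \<in> carrier_vec q" for x using GS by (simp add: carrier_vecI)
  then show ?thesis
    unfolding decodable_def using GM inj by (auto dest: inj_onD)
qed

lemma decodable_prefix_vecs_0: "decodable q GS GM (prefix_vecs q 0)"
  unfolding decodable_def prefix_vecs_def by (auto intro: eq_vecI)

section \<open>Upper bound\<close>

lemma decodable_dim_le_n1:
  assumes "n2 < n1" and q: "q = net_q n1 n2 n3 n4 m"
    and A: "GA \<in> carrier_mat q q" and B: "GB \<in> carrier_mat q q"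
    and X: "subspace class_ring X (module_vec TYPE(bit) q)"
    and dec: "decodable q (G_S n1 n2 n3 n4 m GA GB) (G_M n1 n2 n3 n4 m GA GB) X"
  shows "vec_subspace_dim q X \<le> n1"
proof -
  let ?Q = "\<lambda>j. shift_mat q ^\<^sub>m j"
  let ?g = "\<lambda>y. ?Q (q - n3) *\<^sub>v (GA *\<^sub>v y) + ?Q (q - n4) *\<^sub>v (GB *\<^sub>v (?Q (n1 - n2) *\<^sub>v y))"
  have "n1 \<le> q" using net_q_ge q by auto
  have XC: "X \<subseteq> carrier_vec q" by (rule subspace_carrier_vec[OF X])
  have GM0: "G_M n1 n2 n3 n4 m GA GB *\<^sub>v 0\<^sub>v q = 0\<^sub>v q"
    unfolding q by (rule mult_mat_zero_vec[OF G_M_carrier])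
  have GS: "G_S n1 n2 n3 n4 m GA GB *\<^sub>v x = ?g (?Q (q - n1) *\<^sub>v (1\<^sub>m q *\<^sub>v x))"
    if x: "x \<in> carrier_vec q" for x
  proof -
    have "?Q (q - n2) *\<^sub>v x = ?Q (n1 - n2) *\<^sub>v (?Q (q - n1) *\<^sub>v x)"
      using shift_mat_pow_mult_vec_add[OF x, of "n1 - n2" "q - n1"] assms(1) \<open>n1 \<le> q\<close> by simp
    then show ?thesis using x by (simp only: G_S_mult_vec[OF q x A B] one_mult_mat_vec)
  qed
  have "inj_on (\<lambda>x. G_S n1 n2 n3 n4 m GA GB *\<^sub>v x + G_M n1 n2 n3 n4 m GA GB *\<^sub>v 0\<^sub>v q) X"
    by (rule decodable_inj_on[OF dec]) simp
  moreover have "G_S n1 n2 n3 n4 m GA GB *\<^sub>v x \<in> carrier_vec q" for x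
    unfolding q by (intro carrier_vecI) (metis G_S_carrier carrier_matD(1) dim_mult_mat_vec)
  ultimately have inj: "inj_on (\<lambda>x. G_S n1 n2 n3 n4 m GA GB *\<^sub>v x) X"
    by (simp add: GM0)
  have "inj_on (?g \<circ> (\<lambda>x. ?Q (q - n1) *\<^sub>v (1\<^sub>m q *\<^sub>v x))) X"
    using XC GS by (intro inj_on_cong[THEN iffD1, OF _ inj]) auto
  then have "inj_on (\<lambda>x. ?Q (q - n1) *\<^sub>v (1\<^sub>m q *\<^sub>v x)) X"
    by (rule inj_on_imageI2)
  then show ?thesis
    by (rule subspace_dim_le_of_inj_on_shift[OF X one_carrier_mat \<open>n1 \<le> q\<close>])
qed

lemma decodable_dim_le_n3:
  assumes "n2 < m" and q: "q = net_q n1 n2 n3 n4 m"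
    and A: "GA \<in> carrier_mat q q" and B: "GB \<in> carrier_mat q q"
    and X: "subspace class_ring X (module_vec TYPE(bit) q)"
    and dec: "decodable q (G_S n1 n2 n3 n4 m GA GB) (G_M n1 n2 n3 n4 m GA GB) X"
  shows "vec_subspace_dim q X \<le> n3"
proof -
  let ?Q = "\<lambda>j. shift_mat q ^\<^sub>m j"
  define M where "M = GA * (?Q (q - n1) + ?Q (q - n2))"
  have "n2 \<le> q" "n3 \<le> q" "m \<le> q" using net_q_ge q by auto
  have XC: "X \<subseteq> carrier_vec q" by (rule subspace_carrier_vec[OF X])
  have M: "M \<in> carrier_mat q q" using A by (simp add: M_def)
  have Mx: "M *\<^sub>v x = GA *\<^sub>v (?Q (q - n1) *\<^sub>v x) + GA *\<^sub>v (?Q (q - n2) *\<^sub>v x)"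
    if x: "x \<in> carrier_vec q" for x
  proof -
    have "M *\<^sub>v x = GA *\<^sub>v ((?Q (q - n1) + ?Q (q - n2)) *\<^sub>v x)"
      unfolding M_def using A x by (intro assoc_mult_mat_vec) auto
    also have "\<dots> = GA *\<^sub>v (?Q (q - n1) *\<^sub>v x + ?Q (q - n2) *\<^sub>v x)"
      using x by (subst add_mult_distrib_mat_vec[of _ q q]) auto
    also have "\<dots> = GA *\<^sub>v (?Q (q - n1) *\<^sub>v x) + GA *\<^sub>v (?Q (q - n2) *\<^sub>v x)"
      using x by (intro mult_add_distrib_mat_vec[OF A]) auto
    finally show ?thesis .
  qed
  have replay: "G_S n1 n2 n3 n4 m GA GB *\<^sub>v x + G_M n1 n2 n3 n4 m GA GB *\<^sub>v (?Q (m - n2) *\<^sub>v x)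
      = ?Q (q - n3) *\<^sub>v (M *\<^sub>v x)" if x: "x \<in> carrier_vec q" for x
  proof -
    have replay_at_B: "?Q (q - m) *\<^sub>v (?Q (m - n2) *\<^sub>v x) = ?Q (q - n2) *\<^sub>v x"
      using shift_mat_pow_mult_vec_add[OF x, of "q - m" "m - n2"] assms(1) \<open>m \<le> q\<close> by simp
    have A_part: "?Q (q - n3) *\<^sub>v (M *\<^sub>v x) =
        ?Q (q - n3) *\<^sub>v (GA *\<^sub>v (?Q (q - n1) *\<^sub>v x)) + ?Q (q - n3) *\<^sub>v (GA *\<^sub>v (?Q (q - n2) *\<^sub>v x))"
      unfolding Mx[OF x] using A x by (intro mult_add_distrib_mat_vec) auto
    show ?thesis
      unfolding G_S_mult_vec[OF q x A B] G_M_mult_vec[OF q shift_mat_pow_mult_vec_carrier[OF x] A B]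
        replay_at_B A_part
      by (rule bit_vec_add_cancel[of _ q]) (use A B x in simp_all)
  qed
  have inj: "inj_on (\<lambda>x. G_S n1 n2 n3 n4 m GA GB *\<^sub>v x + G_M n1 n2 n3 n4 m GA GB *\<^sub>v (?Q (m - n2) *\<^sub>v x)) X"
    by (rule decodable_inj_on[OF dec]) (use XC in auto)
  have "inj_on (\<lambda>x. ?Q (q - n3) *\<^sub>v (M *\<^sub>v x)) X"
    using XC replay by (intro inj_on_cong[THEN iffD1, OF _ inj]) auto
  then show ?thesis
    by (rule subspace_dim_le_of_inj_on_shift[OF X M \<open>n3 \<le> q\<close>])
qed

lemma decodable_dim_le_min:
  assumes "n2 < n1" "n2 < m" and q: "q = net_q n1 n2 n3 n4 m"
    and A: "GA \<in> carrier_mat q q" and B: "GB \<in> carrier_mat q q"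
    and X: "subspace class_ring X (module_vec TYPE(bit) q)"
    and dec: "decodable q (G_S n1 n2 n3 n4 m GA GB) (G_M n1 n2 n3 n4 m GA GB) X"
  shows "vec_subspace_dim q X \<le> min n1 n3"
  using decodable_dim_le_n1[OF assms(1) q A B X dec] decodable_dim_le_n3[OF assms(2) q A B X dec]
  by simp

section \<open>Achievability\<close>

lemma eq_if_add_delayed_eq:
  fixes x y :: "nat \<Rightarrow> 'a::cancel_comm_monoid_add"
  assumes "0 < d"
    and eq: "\<And>t. t < k \<Longrightarrow>
      x t + (if d \<le> t then x (t - d) else 0) = y t + (if d \<le> t then y (t - d) else 0)"
  shows "t < k \<Longrightarrow> x t = y t"
proof (induction t rule: less_induct)
  case (less t)
  then have "(if d \<le> t then x (t - d) else 0) = (if d \<le> t then y (t - d) else 0)"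
    using assms(1) by auto
  then show ?case using eq[OF less.prems] by simp
qed

lemma decodable_prefix_vecs:
  fixes n1 n2 n3 n4 m :: nat
  assumes "n2 < n1" "n3 \<le> n4" and q: "q = net_q n1 n2 n3 n4 m"
  defines "GA \<equiv> shift_up_mat q (q - n1)"
  defines "GB \<equiv> shift_mat q ^\<^sub>m (n4 - n3) * GA"
  shows "decodable q (G_S n1 n2 n3 n4 m GA GB) (G_M n1 n2 n3 n4 m GA GB) (prefix_vecs q (min n1 n3))"
proof (rule decodable_if_disturbance_vanishes)
  let ?Q = "\<lambda>j. shift_mat q ^\<^sub>m j"
  have "n1 \<le> q" "n3 \<le> q" "n4 \<le> q" using net_q_ge q by auto
  have A: "GA \<in> carrier_mat q q" by (simp add: GA_def)
  have B: "GB \<in> carrier_mat q q" unfolding GB_def by (rule mult_carrier_mat[OF _ A]) simp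
  have aligned: "?Q (q - n4) *\<^sub>v (GB *\<^sub>v y) = ?Q (q - n3) *\<^sub>v (GA *\<^sub>v y)"
    if y: "y \<in> carrier_vec q" for y
  proof -
    have "GB *\<^sub>v y = ?Q (n4 - n3) *\<^sub>v (GA *\<^sub>v y)"
      unfolding GB_def using A y by (intro assoc_mult_mat_vec) auto
    then show ?thesis
      using shift_mat_pow_mult_vec_add[of "GA *\<^sub>v y" q "q - n4" "n4 - n3"] A y assms(2) \<open>n4 \<le> q\<close>
      by simp
  qed
  show "G_S n1 n2 n3 n4 m GA GB \<in> carrier_mat q q"
    unfolding q by (rule G_S_carrier)
  show "G_M n1 n2 n3 n4 m GA GB *\<^sub>v xm = 0\<^sub>v q" if xm: "xm \<in> carrier_vec q" for xm
    unfolding G_M_mult_vec[OF q xm A B] aligned[OF shift_mat_pow_mult_vec_carrier[OF xm]]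
    by (rule bit_vec_add_self) (use A xm in simp)
  have GS_index: "(G_S n1 n2 n3 n4 m GA GB *\<^sub>v x) $ (q - n3 + t) =
      x $ t + (if n1 - n2 \<le> t then x $ (t - (n1 - n2)) else 0)"
    if x: "x \<in> carrier_vec q" and t: "t < min n1 n3" for x t
  proof -
    have i: "q - n3 + t < q" and j: "t + (q - n1) < q" using t \<open>n1 \<le> q\<close> \<open>n3 \<le> q\<close> by auto
    have level: "(?Q (q - n3) *\<^sub>v (GA *\<^sub>v y)) $ (q - n3 + t) = y $ (t + (q - n1))"
      if "y \<in> carrier_vec q" for y
      using that A i j
      by (subst shift_mat_pow_mult_vec_index)
        (simp_all add: GA_def shift_up_mat_mult_vec_index mult_mat_vec_carrier[OF shift_up_mat_carrier])
    have delay: "q - n2 \<le> t + (q - n1) \<longleftrightarrow> n1 - n2 \<le> t" "t + (q - n1) - (q - n2) = t - (n1 - n2)"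
      using assms(1) \<open>n1 \<le> q\<close> by linarith+
    have "(G_S n1 n2 n3 n4 m GA GB *\<^sub>v x) $ (q - n3 + t) =
        (?Q (q - n3) *\<^sub>v (GA *\<^sub>v (?Q (q - n1) *\<^sub>v x))) $ (q - n3 + t) +
        (?Q (q - n3) *\<^sub>v (GA *\<^sub>v (?Q (q - n2) *\<^sub>v x))) $ (q - n3 + t)"
      unfolding G_S_mult_vec[OF q x A B] aligned[OF shift_mat_pow_mult_vec_carrier[OF x]]
      using i by (subst index_add_vec(1)) simp_all
    also have "\<dots> = (?Q (q - n1) *\<^sub>v x) $ (t + (q - n1)) + (?Q (q - n2) *\<^sub>v x) $ (t + (q - n1))"
      by (simp only: level[OF shift_mat_pow_mult_vec_carrier[OF x]])
    also have "\<dots> = x $ t + (if n1 - n2 \<le> t then x $ (t - (n1 - n2)) else 0)"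
      by (simp only: shift_mat_pow_mult_vec_index[OF x j] delay) simp
    finally show ?thesis .
  qed
  show "inj_on (\<lambda>x. G_S n1 n2 n3 n4 m GA GB *\<^sub>v x) (prefix_vecs q (min n1 n3))"
  proof (rule inj_onI)
    fix x y assume xy: "x \<in> prefix_vecs q (min n1 n3)" "y \<in> prefix_vecs q (min n1 n3)"
      and eq: "G_S n1 n2 n3 n4 m GA GB *\<^sub>v x = G_S n1 n2 n3 n4 m GA GB *\<^sub>v y"
    have "x $ t = y $ t" if "t < min n1 n3" for t
    proof (rule eq_if_add_delayed_eq[of "n1 - n2" "min n1 n3" "\<lambda>t. x $ t" "\<lambda>t. y $ t", OF _ _ that])
      show "0 < n1 - n2" using assms(1) by simp
      show "x $ t + (if n1 - n2 \<le> t then x $ (t - (n1 - n2)) else 0) =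
          y $ t + (if n1 - n2 \<le> t then y $ (t - (n1 - n2)) else 0)" if "t < min n1 n3" for t
        using GS_index[of x t] GS_index[of y t] eq xy that by (simp add: prefix_vecs_def)
    qed
    then show "x = y" by (rule prefix_vecs_eqI[OF xy])
  qed
qed

lemma Max_le_bound_nat:
  fixes A :: "nat set"
  assumes "a \<in> A" and "\<And>x. x \<in> A \<Longrightarrow> x \<le> c"
  shows "Max A \<le> c"
  using assms finite_nat_set_iff_bounded_le by (subst Max_le_iff) blast+

lemma Max_eq_bound_nat:
  fixes A :: "nat set"
  assumes "c \<in> A" and "\<And>x. x \<in> A \<Longrightarrow> x \<le> c"
  shows "Max A = c"
  using assms finite_nat_set_iff_bounded_le by (intro Max_eqI) blast+

lemma net_rate_le:
  assumes "n2 < n1" "n2 < m" and q: "q = net_q n1 n2 n3 n4 m"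
    and A: "GA \<in> carrier_mat q q" and B: "GB \<in> carrier_mat q q"
  shows "net_rate n1 n2 n3 n4 m GA GB \<le> min n1 n3"
  unfolding net_rate_def Let_def q[symmetric]
proof (rule Max_le_bound_nat)
  show "vec_subspace_dim q (prefix_vecs q 0 :: bit vec set) \<in> {vec_subspace_dim q X | X.
      subspace class_ring X (module_vec TYPE(bit) q) \<and>
      decodable q (G_S n1 n2 n3 n4 m GA GB) (G_M n1 n2 n3 n4 m GA GB) X}"
    by (intro CollectI exI[of _ "prefix_vecs q 0"] conjI refl prefix_vecs_subspace
        decodable_prefix_vecs_0)
qed (use decodable_dim_le_min[OF assms] in blast)

lemma net_rate_eqI:
  assumes "n2 < n1" "n2 < m" and q: "q = net_q n1 n2 n3 n4 m"
    and A: "GA \<in> carrier_mat q q" and B: "GB \<in> carrier_mat q q"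
    and X: "subspace class_ring X (module_vec TYPE(bit) q)"
    and dec: "decodable q (G_S n1 n2 n3 n4 m GA GB) (G_M n1 n2 n3 n4 m GA GB) X"
    and dim: "vec_subspace_dim q X = min n1 n3"
  shows "net_rate n1 n2 n3 n4 m GA GB = min n1 n3"
  unfolding net_rate_def Let_def q[symmetric]
proof (rule Max_eq_bound_nat)
  show "min n1 n3 \<in> {vec_subspace_dim q X | X.
      subspace class_ring X (module_vec TYPE(bit) q) \<and>
      decodable q (G_S n1 n2 n3 n4 m GA GB) (G_M n1 n2 n3 n4 m GA GB) X}"
    by (intro CollectI exI[of _ X] conjI dim[symmetric] X dec)
qed (use decodable_dim_le_min[OF assms(1-5)] in blast)

theorem mainTheorem7:
  fixes n1 n2 n3 n4 m :: nat
  assumes "n1 > n2" and "n4 \<ge> n3" and "m > n2"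
  shows "linear_capacity n1 n2 n3 n4 m = min n1 n3"
proof -
  let ?q = "net_q n1 n2 n3 n4 m"
  let ?GA = "shift_up_mat ?q (?q - n1)"
  let ?GB = "shift_mat ?q ^\<^sub>m (n4 - n3) * ?GA"
  have GB: "?GB \<in> carrier_mat ?q ?q"
    by (rule mult_carrier_mat[OF shift_mat_pow_carrier shift_up_mat_carrier])
  have "vec_subspace_dim ?q (prefix_vecs ?q (min n1 n3) :: bit vec set) = min n1 n3"
    using net_q_ge(1)[of n1 n2 n3 n4 m] by (intro prefix_vecs_dim) simp
  then have "net_rate n1 n2 n3 n4 m ?GA ?GB = min n1 n3"
    by (rule net_rate_eqI[OF assms(1,3) refl shift_up_mat_carrier GB prefix_vecs_subspace
          decodable_prefix_vecs[OF assms(1,2) refl]])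
  then have "min n1 n3 \<in> {net_rate n1 n2 n3 n4 m GA GB | GA GB.
      GA \<in> carrier_mat ?q ?q \<and> GB \<in> carrier_mat ?q ?q}"
    by (intro CollectI exI[of _ ?GA] exI[of _ ?GB] conjI shift_up_mat_carrier GB) simp
  then show ?thesis
    unfolding linear_capacity_def Let_def
    by (rule Max_eq_bound_nat) (use net_rate_le[OF assms(1,3) refl] in blast)
qed

end
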